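(* Let $H$ be a graph with vertices $v$ and $w$ such that $\deg(v)=\deg(w)=1$ and $v$ and $w$ have no neighbors in common. Let $G$ be the graph formed from $H$ by adding a new vertex $u$ of degree 2 which is adjacent to $v$ and $w$. If there is an orthogonal vector representation of $\overline{H}$ in $\mathbb{R}^3$ which assigns distinct nonzero vectors to each vertex, then there is such an orthogonal vector representation of $\overline{G}$ in $\mathbb{R}^3$. Hence ${\rm mvr}(\overline{G})\le 3$.
   Context: All graphs are finite and simple; $\overline{G}$ denotes the complement of $G$. An orthogonal vector representation of a graph $G=(V,E)$ in $\mathbb{R}^d$ is a map $\phi:V\to\mathbb{R}^d$ with $\phi(v)\neq 0$ for all $v$, and for distinct $u,v$: $\langle\phi(u),\phi(v)\rangle=0$ if and only if $uv\notin E$. ${\rm mvr}(G)$ is the smallest $d$ for which such a representation exists. *)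

theory Defs
  imports Complex_Main
begin

definition graph :: "'a set \<Rightarrow> ('a \<Rightarrow> 'a \<Rightarrow> bool) \<Rightarrow> bool" where
  "graph V E \<longleftrightarrow> finite V \<and> (\<forall>x y. E x y \<longrightarrow> x \<in> V \<and> y \<in> V)
     \<and> (\<forall>x y. E x y \<longrightarrow> E y x) \<and> (\<forall>x. \<not> E x x)"

definition degree :: "'a set \<Rightarrow> ('a \<Rightarrow> 'a \<Rightarrow> bool) \<Rightarrow> 'a \<Rightarrow> nat" where
  "degree V E x = card {y \<in> V. E x y}"

definition compl_graph :: "'a set \<Rightarrow> ('a \<Rightarrow> 'a \<Rightarrow> bool) \<Rightarrow> ('a \<Rightarrow> 'a \<Rightarrow> bool)" where
  "compl_graph V E = (\<lambda>x y. x \<in> V \<and> y \<in> V \<and> x \<noteq> y \<and> \<not> E x y)"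

text \<open>Vectors of R^d are represented as functions nat => real vanishing outside {..<d};
  the standard inner product is the sum over coordinates below d.\<close>
definition dot :: "nat \<Rightarrow> (nat \<Rightarrow> real) \<Rightarrow> (nat \<Rightarrow> real) \<Rightarrow> real" where
  "dot d x y = (\<Sum>i<d. x i * y i)"

definition orth_rep :: "'a set \<Rightarrow> ('a \<Rightarrow> 'a \<Rightarrow> bool) \<Rightarrow> nat \<Rightarrow> ('a \<Rightarrow> nat \<Rightarrow> real) \<Rightarrow> bool" where
  "orth_rep V E d \<phi> \<longleftrightarrow>
     (\<forall>x\<in>V. (\<forall>i. d \<le> i \<longrightarrow> \<phi> x i = 0) \<and> (\<exists>i<d. \<phi> x i \<noteq> 0)) \<and>
     (\<forall>x\<in>V. \<forall>y\<in>V. x \<noteq> y \<longrightarrow> (dot d (\<phi> x) (\<phi> y) = 0 \<longleftrightarrow> \<not> E x y))"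

definition mvr :: "'a set \<Rightarrow> ('a \<Rightarrow> 'a \<Rightarrow> bool) \<Rightarrow> nat" where
  "mvr V E = (LEAST d. \<exists>\<phi>. orth_rep V E d \<phi>)"

end

theory Submission
  imports Defs
begin

text \<open>Since \<open>v\<close> and \<open>w\<close> are leaves, their vectors may be re-chosen freely in the
  planes orthogonal to the vectors of their unique neighbours. Choosing first \<open>p\<close> for \<open>v\<close> and
  then \<open>q\<close> for \<open>w\<close> generically (each choice avoids finitely many points of a line in the plane),
  the normal \<open>n = p \<times> q\<close> is orthogonal to exactly the vectors of \<open>v\<close> and \<open>w\<close>, and a suitable
  multiple of \<open>n\<close> represents the new vertex \<open>u\<close>.\<close>

definition vec3 :: "(nat \<Rightarrow> real) \<Rightarrow> bool" where
  "vec3 x \<longleftrightarrow> (\<forall>i. 3 \<le> i \<longrightarrow> x i = 0)"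

definition nonzero3 :: "(nat \<Rightarrow> real) \<Rightarrow> bool" where
  "nonzero3 x \<longleftrightarrow> (\<exists>i<3. x i \<noteq> 0)"

definition cross :: "(nat \<Rightarrow> real) \<Rightarrow> (nat \<Rightarrow> real) \<Rightarrow> nat \<Rightarrow> real" where
  "cross x y = (\<lambda>i. if i = 0 then x 1 * y 2 - x 2 * y 1 else if i = 1 then x 2 * y 0 - x 0 * y 2
     else if i = 2 then x 0 * y 1 - x 1 * y 0 else 0)"

lemma cross_simps [simp]:
  "cross x y 0 = x 1 * y 2 - x 2 * y 1" "cross x y 1 = x 2 * y 0 - x 0 * y 2"
  "cross x y (Suc 0) = x 2 * y 0 - x 0 * y 2" "cross x y 2 = x 0 * y 1 - x 1 * y 0"
  by (simp_all add: cross_def)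

lemma vec3_cross [simp]: "vec3 (cross x y)"
  by (simp add: vec3_def cross_def)

lemma nonzero3_iff: "nonzero3 x \<longleftrightarrow> x 0 \<noteq> 0 \<or> x 1 \<noteq> 0 \<or> x 2 \<noteq> 0"
  by (auto simp: nonzero3_def eval_nat_numeral less_Suc_eq)

lemma nonzero3_cross_commute: "nonzero3 (cross x y) \<longleftrightarrow> nonzero3 (cross y x)"
  by (auto simp: nonzero3_iff mult.commute)

lemma dot3_expand: "dot 3 x y = x 0 * y 0 + x 1 * y 1 + x 2 * y 2"
  by (simp add: dot_def eval_nat_numeral)

lemma dot_commute: "dot d x y = dot d y x"
  by (simp add: dot_def mult.commute)

lemma dot_line: "dot d (\<lambda>i. a i + t * b i) c = dot d a c + t * dot d b c"
  by (simp add: dot_def sum.distrib sum_distrib_left algebra_simps)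

lemma dot_scale: "dot d (\<lambda>i. t * b i) c = t * dot d b c"
  by (simp add: dot_def sum_distrib_left algebra_simps)

lemma dot3_self_pos: "nonzero3 x \<Longrightarrow> 0 < dot 3 x x"
proof -
  assume "nonzero3 x"
  then have "0 < x 0 * x 0 \<or> 0 < x 1 * x 1 \<or> 0 < x 2 * x 2"
    unfolding nonzero3_iff by (metis not_real_square_gt_zero)
  then show ?thesis
    unfolding dot3_expand using zero_le_square[of "x 0"] zero_le_square[of "x 1"]
      zero_le_square[of "x 2"] by linarith
qed

lemma nonzero3_if_dot3_neq_0: "dot 3 x y \<noteq> 0 \<Longrightarrow> nonzero3 x"
  by (auto simp: nonzero3_iff dot3_expand)

lemma dot3_cross_self:
  "dot 3 (cross x y) x = 0" "dot 3 (cross x y) y = 0"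
  by (simp_all add: dot3_expand algebra_simps)

lemma dot3_cross_rotate: "dot 3 (cross x y) z = dot 3 y (cross z x)"
  by (simp add: dot3_expand algebra_simps)

lemma cross_line: "cross (\<lambda>i. a i + t * b i) c = (\<lambda>i. cross a c i + t * cross b c i)"
  by (rule ext) (simp add: cross_def algebra_simps)

lemma less_3_cases: "i < (3::nat) \<Longrightarrow> i = 0 \<or> i = 1 \<or> i = 2"
  by auto

lemma cross_cross: "i < 3 \<Longrightarrow> cross a (cross b c) i = dot 3 a c * b i - dot 3 a b * c i"
  by (auto dest!: less_3_cases simp: dot3_expand algebra_simps)

lemma cross_zero_trans:
  assumes "nonzero3 g" "\<not> nonzero3 (cross a g)" "\<not> nonzero3 (cross b g)"
  shows "\<not> nonzero3 (cross a b)"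
proof -
  have h: "a 1*g 2 - a 2*g 1 = 0" "a 2*g 0 - a 0*g 2 = 0" "a 0*g 1 - a 1*g 0 = 0"
    "b 1*g 2 - b 2*g 1 = 0" "b 2*g 0 - b 0*g 2 = 0" "b 0*g 1 - b 1*g 0 = 0"
    using assms(2,3) by (auto simp: nonzero3_iff)
  txt \<open>Each \<open>g\<^sub>i\<^sup>2 (a \<times> b)\<^sub>j\<close> lies in the ideal generated by the components of
    \<open>a \<times> g\<close> and \<open>b \<times> g\<close>.\<close>
  have "g 0^2*(a 1*b 2 - a 2*b 1) = 0 \<and> g 0^2*(a 2*b 0 - a 0*b 2) = 0 \<and> g 0^2*(a 0*b 1-a 1*b 0) = 0
      \<and> g 1^2*(a 1*b 2 - a 2*b 1) = 0 \<and> g 1^2*(a 2*b 0 - a 0*b 2) = 0 \<and> g 1^2*(a 0*b 1-a 1*b 0) = 0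
      \<and> g 2^2*(a 1*b 2 - a 2*b 1) = 0 \<and> g 2^2*(a 2*b 0 - a 0*b 2) = 0 \<and> g 2^2*(a 0*b 1-a 1*b 0) = 0"
    using h by algebra
  then show ?thesis using assms(1) by (auto simp: nonzero3_iff)
qed

lemma nonzero3_cross_if_orth_not_orth:
  assumes "nonzero3 k" "dot 3 r k = 0" "dot 3 r m \<noteq> 0"
  shows "nonzero3 (cross k m)"
proof (rule ccontr)
  assume "\<not> nonzero3 (cross k m)"
  then have "cross r (cross k m) i = 0" if "i < 3" for i
    using that by (auto dest!: less_3_cases simp: nonzero3_iff)
  then have "dot 3 r m * k i = 0" if "i < 3" for i
    using that cross_cross[of i r k m] assms(2) by simp
  then show False using assms(1,3) by (auto simp: nonzero3_def)
qed

lemma orth_plane_not_orth_if_nonparallel: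
  assumes "nonzero3 d" "dot 3 d m = 0" "nonzero3 (cross k m)"
  shows "dot 3 d k \<noteq> 0 \<or> dot 3 (cross m d) k \<noteq> 0"
proof (rule ccontr)
  assume "\<not> ?thesis"
  then have "dot 3 d k = 0" "dot 3 (cross m d) k = 0" by auto
  then have "dot 3 d d * cross k m 0 = 0 \<and> dot 3 d d * cross k m 1 = 0 \<and> dot 3 d d * cross k m 2 = 0"
    using assms(2) unfolding dot3_expand cross_simps by algebra
  then show False using assms(3) dot3_self_pos[OF assms(1)] by (auto simp: nonzero3_iff)
qed

lemma finite_affine_zeros:
  fixes a b :: real
  assumes "a \<noteq> 0 \<or> b \<noteq> 0"
  shows "finite {t. a + t * b = 0}"
proof (cases "b = 0")
  case True
  then show ?thesis using assms by simp
next
  case False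
  then have "{t. a + t * b = 0} \<subseteq> {- a / b}" by (auto simp: field_simps)
  then show ?thesis by (rule finite_subset) simp
qed

lemma finite_line_zeros:
  assumes "nonzero3 a \<or> nonzero3 b"
  shows "finite {t. \<not> nonzero3 (\<lambda>i. a i + t * b i)}"
proof -
  from assms obtain i where i: "i < 3" "a i \<noteq> 0 \<or> b i \<noteq> 0"
    by (auto simp: nonzero3_def)
  then have "{t. \<not> nonzero3 (\<lambda>i. a i + t * b i)} \<subseteq> {t. a i + t * b i = 0}"
    by (auto simp: nonzero3_def)
  then show ?thesis using finite_affine_zeros[OF i(2)] by (rule finite_subset)
qed

text \<open>The candidates are the points \<open>d + t (m \<times> d)\<close> of a line in the plane orthogonal to \<open>m\<close>;
  each requirement fails for only finitely many \<open>t\<close>.\<close>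

lemma exists_generic_orthogonal3:
  assumes m: "nonzero3 m" and d: "vec3 d" "nonzero3 d" "dot 3 d m = 0"
    and Ks: "finite Ks" "\<forall>k\<in>Ks. nonzero3 (cross k m)"
    and Gs: "finite Gs" "\<forall>g\<in>Gs. nonzero3 g"
    and Xs: "finite Xs"
  shows "\<exists>p. vec3 p \<and> nonzero3 p \<and> dot 3 p m = 0 \<and> (\<forall>k\<in>Ks. dot 3 p k \<noteq> 0)
           \<and> (\<forall>g\<in>Gs. nonzero3 (cross p g)) \<and> p \<notin> Xs"
proof -
  define e where "e = cross m d"
  define p where "p t = (\<lambda>i. d i + t * e i)" for t
  have "cross d e i = dot 3 d d * m i" if "i < 3" for i
    using cross_cross[OF that, of d m d] d(3) by (simp add: e_def dot_commute)
  then have de: "nonzero3 (cross d e)"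
    using m dot3_self_pos[OF d(2)] by (auto simp: nonzero3_def)
  then have e: "nonzero3 e" by (auto simp: nonzero3_iff)
  have bad_k: "finite {t. dot 3 (p t) k = 0}" if "k \<in> Ks" for k
  proof -
    have "dot 3 d k \<noteq> 0 \<or> dot 3 e k \<noteq> 0"
      using orth_plane_not_orth_if_nonparallel[OF d(2,3)] Ks(2) that by (simp add: e_def)
    then have "finite {t. dot 3 d k + t * dot 3 e k = 0}" by (rule finite_affine_zeros)
    then show ?thesis by (simp add: p_def dot_line)
  qed
  have bad_g: "finite {t. \<not> nonzero3 (cross (p t) g)}" if "g \<in> Gs" for g
  proof -
    have "nonzero3 (cross d g) \<or> nonzero3 (cross e g)"
      using cross_zero_trans[of g d e] Gs(2) that de by blast
    then have "finite {t. \<not> nonzero3 (\<lambda>i. cross d g i + t * cross e g i)}"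
      by (rule finite_line_zeros)
    then show ?thesis by (simp add: p_def cross_line)
  qed
  have bad_x: "finite {t. p t = x}" for x
  proof -
    have "{t. p t = x} \<subseteq> {t. \<not> nonzero3 (\<lambda>i. (d i - x i) + t * e i)}"
      by (auto simp: p_def nonzero3_def)
    moreover have "finite {t. \<not> nonzero3 (\<lambda>i. (d i - x i) + t * e i)}"
      using e by (intro finite_line_zeros) simp
    ultimately show ?thesis by (rule finite_subset)
  qed
  define bad where "bad = (\<Union>k\<in>Ks. {t. dot 3 (p t) k = 0})
    \<union> (\<Union>g\<in>Gs. {t. \<not> nonzero3 (cross (p t) g)}) \<union> (\<Union>x\<in>Xs. {t. p t = x})"
  have "finite bad"
    unfolding bad_def using Ks(1) Gs(1) Xs bad_k bad_g bad_x by (intro finite_UnI finite_UN_I)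
  then obtain t where "t \<notin> bad"
    using ex_new_if_finite[OF infinite_UNIV_char_0] by blast
  then have t: "\<forall>k\<in>Ks. dot 3 (p t) k \<noteq> 0" "\<forall>g\<in>Gs. nonzero3 (cross (p t) g)" "p t \<notin> Xs"
    unfolding bad_def by blast+
  have "dot 3 (p t) d = dot 3 d d" "dot 3 (p t) m = 0"
    using d(3) dot3_cross_self[of m d] by (simp_all add: p_def e_def dot_line dot_commute)
  moreover have "vec3 (p t)"
    using d(1) vec3_cross[of m d] by (simp add: vec3_def p_def e_def)
  ultimately show ?thesis
    using t dot3_self_pos[OF d(2)] nonzero3_if_dot3_neq_0[of "p t" d] by auto
qed

definition orth_compl_rep3 :: "'a set \<Rightarrow> ('a \<Rightarrow> 'a \<Rightarrow> bool) \<Rightarrow> ('a \<Rightarrow> nat \<Rightarrow> real) \<Rightarrow> bool" where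
  "orth_compl_rep3 V E \<phi> \<longleftrightarrow> inj_on \<phi> V \<and> (\<forall>x\<in>V. vec3 (\<phi> x) \<and> nonzero3 (\<phi> x)) \<and>
     (\<forall>x\<in>V. \<forall>y\<in>V. x \<noteq> y \<longrightarrow> (dot 3 (\<phi> x) (\<phi> y) = 0 \<longleftrightarrow> E x y))"

lemma orth_rep_compl_graph_iff:
  "orth_rep V (compl_graph V E) 3 \<phi> \<and> inj_on \<phi> V \<longleftrightarrow> orth_compl_rep3 V E \<phi>"
  by (auto simp: orth_rep_def orth_compl_rep3_def compl_graph_def vec3_def nonzero3_def)

lemma orth_compl_rep3_update:
  assumes \<phi>: "orth_compl_rep3 V E \<phi>" and "symp E"
    and p: "vec3 p" "nonzero3 p" "\<forall>x\<in>V-{y}. dot 3 p (\<phi> x) = 0 \<longleftrightarrow> E y x"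
    and new: "p \<notin> \<phi> ` (V - {y})"
  shows "orth_compl_rep3 V E (\<phi>(y := p))"
proof -
  have "inj_on (\<phi>(y := p)) V"
    using \<phi> new unfolding orth_compl_rep3_def inj_on_def by (auto simp: image_iff)
  then show ?thesis
    using \<phi> p \<open>symp E\<close> unfolding orth_compl_rep3_def
    by (auto simp: dot_commute[of 3 _ p] dest: sympD)
qed

lemma rechoose_leaf_vector:
  assumes \<phi>: "orth_compl_rep3 V E \<phi>" and "finite V" "symp E"
    and y: "y \<in> V" and z: "z \<in> V" "z \<noteq> y" and leaf: "\<forall>x\<in>V. E y x \<longleftrightarrow> x = z"
    and Ks: "finite Ks" "\<forall>k\<in>Ks. nonzero3 (cross k (\<phi> z))"
    and Gs: "finite Gs" "\<forall>g\<in>Gs. nonzero3 g"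
  shows "\<exists>p. orth_compl_rep3 V E (\<phi>(y := p)) \<and> nonzero3 p \<and> dot 3 p (\<phi> z) = 0
      \<and> (\<forall>x\<in>V-{y,z}. dot 3 p (\<phi> x) \<noteq> 0) \<and> (\<forall>k\<in>Ks. dot 3 p k \<noteq> 0)
      \<and> (\<forall>g\<in>Gs. nonzero3 (cross p g))"
proof -
  have vecs: "vec3 (\<phi> x)" "nonzero3 (\<phi> x)" if "x \<in> V" for x
    using \<phi> that by (auto simp: orth_compl_rep3_def)
  have orth: "dot 3 (\<phi> x) (\<phi> x') = 0 \<longleftrightarrow> E x x'" if "x \<in> V" "x' \<in> V" "x \<noteq> x'" for x x'
    using \<phi> that by (auto simp: orth_compl_rep3_def)
  have yz: "dot 3 (\<phi> y) (\<phi> z) = 0" using orth[OF y z(1)] z leaf by auto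
  have others: "nonzero3 (cross (\<phi> x) (\<phi> z))" if "x \<in> V - {y, z}" for x
  proof -
    have "dot 3 (\<phi> y) (\<phi> x) \<noteq> 0" using orth[OF y, of x] leaf that by auto
    then show ?thesis
      using nonzero3_cross_if_orth_not_orth[OF vecs(2)[OF z(1)] yz] nonzero3_cross_commute by blast
  qed
  obtain p where p: "vec3 p" "nonzero3 p" "dot 3 p (\<phi> z) = 0"
      "\<forall>k\<in>Ks \<union> \<phi> ` (V - {y, z}). dot 3 p k \<noteq> 0" "\<forall>g\<in>Gs. nonzero3 (cross p g)"
      "p \<notin> \<phi> ` (V - {y})"
    using exists_generic_orthogonal3[OF vecs(2)[OF z(1)] vecs(1,2)[OF y] yz,
        of "Ks \<union> \<phi> ` (V - {y, z})" Gs "\<phi> ` (V - {y})"]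
      Ks Gs others \<open>finite V\<close> by blast
  have "\<forall>x\<in>V-{y}. dot 3 p (\<phi> x) = 0 \<longleftrightarrow> E y x" using p(3,4) leaf by auto
  then show ?thesis
    using orth_compl_rep3_update[OF \<phi> \<open>symp E\<close> p(1,2) _ p(6)] p by auto
qed

lemma common_normal_of_two_leaves:
  assumes \<phi>: "orth_compl_rep3 V E \<phi>" and fin: "finite V" and sym: "symp E"
    and y1: "y1 \<in> V" "z1 \<in> V" "z1 \<noteq> y1" "\<forall>x\<in>V. E y1 x \<longleftrightarrow> x = z1"
    and y2: "y2 \<in> V" "z2 \<in> V" "z2 \<noteq> y2" "\<forall>x\<in>V. E y2 x \<longleftrightarrow> x = z2"
    and "y1 \<noteq> y2" "z1 \<noteq> z2"
  shows "\<exists>\<phi>' n. orth_compl_rep3 V E \<phi>' \<and> vec3 n \<and> nonzero3 n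
      \<and> dot 3 n (\<phi>' y1) = 0 \<and> dot 3 n (\<phi>' y2) = 0 \<and> (\<forall>x\<in>V-{y1,y2}. dot 3 n (\<phi>' x) \<noteq> 0)"
proof -
  obtain p where p: "orth_compl_rep3 V E (\<phi>(y1 := p))" "nonzero3 p"
      "\<forall>x\<in>V-{y1,z1}. dot 3 p (\<phi> x) \<noteq> 0" "\<forall>g\<in>\<phi> ` (V-{y1}). nonzero3 (cross p g)"
    using rechoose_leaf_vector[OF \<phi> fin sym y1, of "{}" "\<phi> ` (V-{y1})"] \<phi> fin
    by (auto simp: orth_compl_rep3_def)
  define \<phi>1 where "\<phi>1 = \<phi>(y1 := p)"
  txt \<open>If \<open>z2 = y1\<close>, i.e. \<open>y1 y2\<close> is an isolated edge, this is \<open>p \<bullet> p \<noteq> 0\<close>.\<close>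
  have p_z2: "dot 3 p (\<phi>1 z2) \<noteq> 0"
    using dot3_self_pos[OF p(2)] p(3) y2(2) \<open>z1 \<noteq> z2\<close> by (cases "z2 = y1") (auto simp: \<phi>1_def)
  txt \<open>As \<open>(p \<times> q) \<bullet> \<phi> x = q \<bullet> (\<phi> x \<times> p)\<close>, the vector \<open>q\<close> must avoid the planes
    orthogonal to the following vectors.\<close>
  define Ks where "Ks = (\<lambda>x. cross (\<phi> x) p) ` (V-{y1,y2})"
  have Ks: "\<forall>k\<in>Ks. nonzero3 (cross k (\<phi>1 z2))"
  proof
    fix k assume "k \<in> Ks"
    then obtain x where x: "x \<in> V-{y1,y2}" "k = cross (\<phi> x) p" by (auto simp: Ks_def)
    then have "nonzero3 k" using p(4) nonzero3_cross_commute by auto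
    moreover have "dot 3 p k = 0" using x(2) dot3_cross_self dot_commute by metis
    ultimately show "nonzero3 (cross k (\<phi>1 z2))"
      using nonzero3_cross_if_orth_not_orth p_z2 by blast
  qed
  obtain q where q: "orth_compl_rep3 V E (\<phi>1(y2 := q))"
      "\<forall>k\<in>Ks. dot 3 q k \<noteq> 0" "nonzero3 (cross q p)"
    using rechoose_leaf_vector[OF p(1)[folded \<phi>1_def] fin sym y2 _ Ks, of "{p}"] p(2) fin
    by (auto simp: Ks_def)
  have "dot 3 (cross p q) (\<phi> x) \<noteq> 0" if "x \<in> V-{y1,y2}" for x
    using q(2) that dot3_cross_rotate by (auto simp: Ks_def)
  then show ?thesis
    using q(1,3) \<open>y1 \<noteq> y2\<close> dot3_cross_self[of p q] nonzero3_cross_commute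
    by (intro exI[of _ "\<phi>1(y2 := q)"] exI[of _ "cross p q"]) (auto simp: \<phi>1_def)
qed

lemma orth_compl_rep3_add_vertex:
  assumes \<phi>: "orth_compl_rep3 V E \<phi>" and fin: "finite V" and "u \<notin> V"
    and n: "vec3 n" "nonzero3 n"
    and EG_V: "\<forall>x\<in>V. \<forall>y\<in>V. EG x y \<longleftrightarrow> E x y"
    and EG_u: "\<forall>x\<in>V. (EG u x \<longleftrightarrow> dot 3 n (\<phi> x) = 0) \<and> (EG x u \<longleftrightarrow> dot 3 n (\<phi> x) = 0)"
  shows "\<exists>\<psi>. orth_compl_rep3 (insert u V) EG \<psi>"
proof -
  have "finite {s. (\<lambda>i. s * n i) = \<phi> x}" for x
  proof -
    have "{s. (\<lambda>i. s * n i) = \<phi> x} \<subseteq> {s. \<not> nonzero3 (\<lambda>i. - \<phi> x i + s * n i)}"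
      by (auto simp: nonzero3_def fun_eq_iff)
    moreover have "finite {s. \<not> nonzero3 (\<lambda>i. - \<phi> x i + s * n i)}"
      using n(2) by (intro finite_line_zeros) simp
    ultimately show ?thesis by (rule finite_subset)
  qed
  then have "finite (insert 0 (\<Union>x\<in>V. {s. (\<lambda>i. s * n i) = \<phi> x}))" using fin by blast
  then obtain s where "s \<notin> insert 0 (\<Union>x\<in>V. {s. (\<lambda>i. s * n i) = \<phi> x})"
    using ex_new_if_finite[OF infinite_UNIV_char_0] by blast
  then have s: "s \<noteq> 0" "(\<lambda>i. s * n i) \<notin> \<phi> ` V" by auto
  have scale: "dot 3 (\<lambda>i. s * n i) f = s * dot 3 n f" "dot 3 f (\<lambda>i. s * n i) = s * dot 3 n f" for f
    by (simp_all add: dot_scale dot_commute[of 3 f])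
  have "orth_compl_rep3 (insert u V) EG (\<phi>(u := (\<lambda>i. s * n i)))"
    using \<phi> n s \<open>u \<notin> V\<close> EG_V EG_u
    by (auto simp: orth_compl_rep3_def scale vec3_def nonzero3_def inj_on_def image_iff)
  then show ?thesis by blast
qed

theorem lemma4p5:
  fixes V :: "'a set" and E :: "'a \<Rightarrow> 'a \<Rightarrow> bool" and u v w :: 'a
    and EG :: "'a \<Rightarrow> 'a \<Rightarrow> bool"
  assumes H: "graph V E"
    and vV: "v \<in> V" and wV: "w \<in> V"
    and dv: "degree V E v = 1" and dw: "degree V E w = 1"
    and nocommon: "\<not> (\<exists>x\<in>V. E v x \<and> E w x)"
    and u_new: "u \<notin> V"
    and EG_def: "EG = (\<lambda>x y. E x y \<or> (x = u \<and> (y = v \<or> y = w)) \<or> (y = u \<and> (x = v \<or> x = w)))"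
    and repH: "\<exists>\<phi>. orth_rep V (compl_graph V E) 3 \<phi> \<and> inj_on \<phi> V"
  shows "(\<exists>\<psi>. orth_rep (insert u V) (compl_graph (insert u V) EG) 3 \<psi> \<and> inj_on \<psi> (insert u V))
         \<and> mvr (insert u V) (compl_graph (insert u V) EG) \<le> 3"
proof -
  have fin: "finite V" and EV: "\<And>x y. E x y \<Longrightarrow> x \<in> V \<and> y \<in> V"
    and sym: "symp E" and irr: "\<And>x. \<not> E x x"
    using H unfolding graph_def symp_def by auto
  obtain \<phi> where \<phi>: "orth_compl_rep3 V E \<phi>" using repH orth_rep_compl_graph_iff by blast
  obtain a where a: "{y\<in>V. E v y} = {a}" using dv unfolding degree_def by (rule card_1_singletonE)
  obtain b where b: "{y\<in>V. E w y} = {b}" using dw unfolding degree_def by (rule card_1_singletonE)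
  have a': "a \<in> V" "a \<noteq> v" "\<forall>x\<in>V. E v x \<longleftrightarrow> x = a" and b': "b \<in> V" "b \<noteq> w" "\<forall>x\<in>V. E w x \<longleftrightarrow> x = b"
    using a b irr by blast+
  have "v \<noteq> w" "a \<noteq> b" using nocommon a' b' by auto
  then obtain \<phi>' n where \<phi>': "orth_compl_rep3 V E \<phi>'" "vec3 n" "nonzero3 n"
      "dot 3 n (\<phi>' v) = 0" "dot 3 n (\<phi>' w) = 0" "\<forall>x\<in>V-{v,w}. dot 3 n (\<phi>' x) \<noteq> 0"
    using common_normal_of_two_leaves[OF \<phi> fin sym vV a' wV b'] by blast
  have "\<forall>x\<in>V. (EG u x \<longleftrightarrow> dot 3 n (\<phi>' x) = 0) \<and> (EG x u \<longleftrightarrow> dot 3 n (\<phi>' x) = 0)"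
    using \<phi>'(4-6) u_new EV unfolding EG_def by blast
  moreover have "\<forall>x\<in>V. \<forall>y\<in>V. EG x y \<longleftrightarrow> E x y" using u_new unfolding EG_def by auto
  ultimately obtain \<psi> where "orth_compl_rep3 (insert u V) EG \<psi>"
    using orth_compl_rep3_add_vertex[OF \<phi>'(1) fin u_new \<phi>'(2,3)] by blast
  then have \<psi>: "orth_rep (insert u V) (compl_graph (insert u V) EG) 3 \<psi>" "inj_on \<psi> (insert u V)"
    using orth_rep_compl_graph_iff by blast+
  then have "mvr (insert u V) (compl_graph (insert u V) EG) \<le> 3"
    unfolding mvr_def by (blast intro: Least_le)
  with \<psi> show ?thesis by blast
qed

end
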